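(* For every $m\ge0$, $\sigma(x^m)=(-1)^my^m$ and $\sigma(y^m)=(-1)^mx^m$ in $\mathcal S$.
   Context: Chord diagrams and $w_{\mathfrak{sl}_2}(D)=\sum_\varphi x_{\varphi(p_1)}\cdots x_{\varphi(p_{2n})}\in\mathbb C[c]$ ($x_1,x_2,x_3$ the basis $\tfrac12\begin{pmatrix}0&1\\1&0\end{pmatrix},\tfrac12\begin{pmatrix}0&-i\\ i&0\end{pmatrix},\tfrac12\begin{pmatrix}1&0\\0&-1\end{pmatrix}$ of $\mathfrak{sl}_2$, $c=\sum x_i^2$, endpoints read in order from a cut point, $\varphi$ over maps chords$\to\{1,2,3\}$). A share: two oriented intervals (strand 1, strand 2) with finitely many chords, up to orientation-preserving diffeomorphisms of each strand; bridges are chords with one endpoint on each strand. Join $(I,H)$: chord diagram whose circle reads strand 1 of $I$, strand 1 of $H$, strand 2 of $I$, strand 2 of $H$. $\mathcal S$: quotient of the $\mathbb C$-span of shares by $I\sim I'$ iff $w_{\mathfrak{sl}_2}((I,H))=w_{\mathfrak{sl}_2}((I',H))$ for all shares $H$. $x^m$ is the class of the share with $m$ bridges occurring in the same order on both strands; $y^m$ is the class of the share with $m$ bridges $b_1,\dots,b_m$ in order $b_1,\dots,b_m$ on strand 1 and $b_m,\dots,b_1$ on strand 2. For a share $I$ with $m$ chords, $\overline I$ reverses the order of chord endpoints along one strand, and $\sigma(I)=(-1)^m\overline I$, extended linearly; it is a well-defined involution of $\mathcal S$. *)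

theory Defs
  imports Complex_Main "HOL-Library.FuncSet" "Jordan_Normal_Form.Matrix"
begin

text \<open>Irreducible representation V_n of sl2 (dimension n+1), basis v_0..v_n:
  h v_k = (n-2k) v_k, f v_k = v_(k+1), e v_k = k(n-k+1) v_(k-1).
  The basis x1 = (e+f)/2, x2 = (e-f)/(2i), x3 = h/2 is the basis of the paper
  (for n = 1 these are exactly the matrices of the paper).\<close>

definition sl2_e :: "nat \<Rightarrow> complex mat" where
  "sl2_e n = mat (n+1) (n+1) (\<lambda>(r,c). if r + 1 = c then of_nat (c * (n + 1 - c)) else 0)"

definition sl2_f :: "nat \<Rightarrow> complex mat" where
  "sl2_f n = mat (n+1) (n+1) (\<lambda>(r,c). if r = c + 1 then 1 else 0)"

definition sl2_h :: "nat \<Rightarrow> complex mat" where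
  "sl2_h n = mat (n+1) (n+1) (\<lambda>(r,c). if r = c then of_int (int n - 2 * int c) else 0)"

definition sl2_x :: "nat \<Rightarrow> nat \<Rightarrow> complex mat" where
  "sl2_x n i = (if i = 1 then (1/2) \<cdot>\<^sub>m (sl2_e n + sl2_f n)
               else if i = 2 then (1/(2*\<i>)) \<cdot>\<^sub>m (sl2_e n - sl2_f n)
               else (1/2) \<cdot>\<^sub>m sl2_h n)"

text \<open>A chord diagram is a cyclic word, cut at a point, in which every chord label
  occurs exactly twice.  Image of w_sl2(D) in V_n:
  sum over colourings phi of the product x_phi(p1) ... x_phi(p2k).\<close>

definition chord_word :: "'a list \<Rightarrow> bool" where
  "chord_word w \<longleftrightarrow> (\<forall>a \<in> set w. count_list w a = 2)"

definition w_sl2_rep :: "nat \<Rightarrow> 'a list \<Rightarrow> complex mat" where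
  "w_sl2_rep n w = mat (n+1) (n+1) (\<lambda>ij.
     (\<Sum>\<phi> \<in> (set w \<rightarrow>\<^sub>E {1,2,3::nat}). foldr (\<lambda>a M. sl2_x n (\<phi> a) * M) w (1\<^sub>m (n+1)) $$ ij))"

text \<open>Equality of w_sl2 values in U(sl2) (the values lie in C[c]): U(sl2) acts
  faithfully on the sum of all finite-dimensional irreducibles V_n.\<close>

type_synonym share = "nat list \<times> nat list"

definition wf_share :: "share \<Rightarrow> bool" where
  "wf_share I \<longleftrightarrow> chord_word (fst I @ snd I)"

definition num_chords :: "share \<Rightarrow> nat" where
  "num_chords I = length (fst I @ snd I) div 2"

definition join :: "share \<Rightarrow> share \<Rightarrow> (nat + nat) list" where
  "join I H = map Inl (fst I) @ map Inr (fst H) @ map Inl (snd I) @ map Inr (snd H)"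

text \<open>Elements of the C-span of shares: finite formal linear combinations.\<close>
type_synonym share_comb = "(complex \<times> share) list"

definition pairing :: "nat \<Rightarrow> share_comb \<Rightarrow> share \<Rightarrow> complex mat" where
  "pairing n C H = mat (n+1) (n+1) (\<lambda>ij.
     sum_list (map (\<lambda>(a, I). a * (w_sl2_rep n (join I H) $$ ij)) C))"

text \<open>Equality in the quotient S.\<close>
definition S_eq :: "share_comb \<Rightarrow> share_comb \<Rightarrow> bool" where
  "S_eq C D \<longleftrightarrow> (\<forall>H. wf_share H \<longrightarrow> (\<forall>n. pairing n C H = pairing n D H))"

definition x_share :: "nat \<Rightarrow> share" where
  "x_share m = ([0..<m], [0..<m])"

definition y_share :: "nat \<Rightarrow> share" where
  "y_share m = ([0..<m], rev [0..<m])"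

definition share_bar :: "share \<Rightarrow> share" where
  "share_bar I = (fst I, rev (snd I))"

definition sigma :: "share_comb \<Rightarrow> share_comb" where
  "sigma C = map (\<lambda>(a, I). ((-1) ^ num_chords I * a, share_bar I)) C"

end

theory Submission
  imports Defs
begin

lemma S_eq_refl: "S_eq C C"
  by (simp add: S_eq_def)

lemma num_chords_x_share [simp]: "num_chords (x_share m) = m"
  by (simp add: num_chords_def x_share_def)

lemma num_chords_y_share [simp]: "num_chords (y_share m) = m"
  by (simp add: num_chords_def y_share_def)

lemma share_bar_x_share [simp]: "share_bar (x_share m) = y_share m"
  by (simp add: share_bar_def x_share_def y_share_def)

lemma share_bar_y_share [simp]: "share_bar (y_share m) = x_share m"
  by (simp add: share_bar_def x_share_def y_share_def)

lemma sigma_single: "sigma [(a, I)] = [((-1) ^ num_chords I * a, share_bar I)]"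
  by (simp add: sigma_def)

theorem lemma7:
  fixes m :: nat
  shows "S_eq (sigma [(1, x_share m)]) [((-1) ^ m, y_share m)]
       \<and> S_eq (sigma [(1, y_share m)]) [((-1) ^ m, x_share m)]"
  by (simp add: sigma_single S_eq_refl)

end
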